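(* Let $H$ be a separable Hilbert space, $0<p<1$, and $T$ any nonzero bounded linear operator on $H$. Then there exists a frame $\{f_n\}$ for $H$ such that $\{\langle Tf_n,f_n\rangle\}\notin\ell^p$.
   Context: A sequence $\{f_n\}$ in $H$ is a frame if there are constants $0<C_1\le C_2$ such that $C_1\|f\|^2\le\sum_n|\langle f,f_n\rangle|^2\le C_2\|f\|^2$ for all $f\in H$. *)

theory Defs
  imports "HOL-Analysis.Analysis"
begin

text \<open>Complex Hilbert spaces: a Banach space (over the reals, as in HOL-Analysis) carrying
  a complex scalar multiplication compatible with the real one, and a complex inner
  product, linear in the first argument, conjugate-symmetric, inducing the norm.\<close>

class complex_hilbert = banach +
  fixes scaleC :: "complex \<Rightarrow> 'a \<Rightarrow> 'a" (infixr "*\<^sub>C" 75)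
    and cinner :: "'a \<Rightarrow> 'a \<Rightarrow> complex"
  assumes scaleC_add_right: "a *\<^sub>C (x + y) = a *\<^sub>C x + a *\<^sub>C y"
    and scaleC_add_left: "(a + b) *\<^sub>C x = a *\<^sub>C x + b *\<^sub>C x"
    and scaleC_scaleC: "a *\<^sub>C (b *\<^sub>C x) = (a * b) *\<^sub>C x"
    and scaleC_one: "1 *\<^sub>C x = x"
    and scaleR_scaleC: "scaleR r x = complex_of_real r *\<^sub>C x"
    and cinner_commute: "cinner x y = cnj (cinner y x)"
    and cinner_add_left: "cinner (x + y) z = cinner x z + cinner y z"
    and cinner_scaleC_left: "cinner (a *\<^sub>C x) y = a * cinner x y"
    and cinner_self_norm: "cinner x x = complex_of_real ((norm x)\<^sup>2)"

definition separable_space :: "'a::topological_space itself \<Rightarrow> bool" where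
  "separable_space _ \<longleftrightarrow> (\<exists>D::'a set. countable D \<and> closure D = UNIV)"

definition complex_bounded_linear :: "('a::complex_hilbert \<Rightarrow> 'b::complex_hilbert) \<Rightarrow> bool" where
  "complex_bounded_linear T \<longleftrightarrow> bounded_linear T \<and> (\<forall>c x. T (c *\<^sub>C x) = c *\<^sub>C T x)"

definition is_frame :: "(nat \<Rightarrow> 'a::complex_hilbert) \<Rightarrow> bool" where
  "is_frame F \<longleftrightarrow> (\<exists>C1 C2::real. 0 < C1 \<and> C1 \<le> C2 \<and>
     (\<forall>f. summable (\<lambda>n. (cmod (cinner f (F n)))\<^sup>2) \<and>
          C1 * (norm f)\<^sup>2 \<le> (\<Sum>n. (cmod (cinner f (F n)))\<^sup>2) \<and>
          (\<Sum>n. (cmod (cinner f (F n)))\<^sup>2) \<le> C2 * (norm f)\<^sup>2))"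

definition in_ell_p :: "real \<Rightarrow> (nat \<Rightarrow> complex) \<Rightarrow> bool" where
  "in_ell_p p a \<longleftrightarrow> summable (\<lambda>n. (cmod (a n)) powr p)"

end

theory Submission
  imports Defs
begin

text \<open>Gram--Schmidt applied to a dense sequence gives a Parseval frame \<open>e\<^sub>n\<close> (orthonormal
  vectors and zeros). Since \<open>T \<noteq> 0\<close>, polarization gives a unit vector \<open>u\<close> with \<open>\<langle>Tu,u\<rangle> \<noteq> 0\<close>.
  Interleave \<open>e\<^sub>n\<close> with \<open>c\<^sub>n u\<close>, where \<open>c\<^sub>n\<^sup>2 = (n+1) powr (-1/p)\<close>: as \<open>1/p > 1\<close> the added vectors
  are square summable, so they form a Bessel sequence and the union is still a frame, whereas
  \<open>|\<langle>T(c\<^sub>n u), c\<^sub>n u\<rangle>|\<^sup>p = |\<langle>Tu,u\<rangle>|\<^sup>p / (n+1)\<close> is not summable.\<close>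

lemma scaleC_zero_left [simp]: "(0::complex) *\<^sub>C (x::'a::complex_hilbert) = 0"
  using scaleC_add_left[of 0 0 x] by simp

lemma cinner_zero_left [simp]: "cinner (0::'a::complex_hilbert) y = 0"
  using cinner_add_left[of 0 0 y] by simp

lemma cinner_zero_right [simp]: "cinner (y::'a::complex_hilbert) 0 = 0"
  using cinner_commute[of y 0] by simp

lemma cinner_add_right: "cinner (x::'a::complex_hilbert) (y + z) = cinner x y + cinner x z"
  by (metis cinner_add_left cinner_commute complex_cnj_add)

lemma cinner_scaleC_right: "cinner (x::'a::complex_hilbert) (a *\<^sub>C y) = cnj a * cinner x y"
  by (metis cinner_scaleC_left cinner_commute complex_cnj_mult)

lemma cinner_minus_left: "cinner (- x::'a::complex_hilbert) y = - cinner x y"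
proof -
  have "- x = complex_of_real (-1) *\<^sub>C x"
    using scaleR_scaleC[of "-1" x] by simp
  then show ?thesis
    by (simp add: cinner_scaleC_left)
qed

lemma cinner_diff_left: "cinner (x - z::'a::complex_hilbert) y = cinner x y - cinner z y"
  using cinner_add_left[of x "-z" y] cinner_minus_left[of z y] by simp

lemma cinner_diff_right: "cinner (y::'a::complex_hilbert) (x - z) = cinner y x - cinner y z"
  by (metis cinner_commute cinner_diff_left complex_cnj_diff)

lemma cinner_sum_left: "cinner (sum f A :: 'a::complex_hilbert) y = (\<Sum>i\<in>A. cinner (f i) y)"
  by (induct A rule: infinite_finite_induct) (simp_all add: cinner_add_left)

lemma cinner_sum_right: "cinner (y :: 'a::complex_hilbert) (sum f A) = (\<Sum>i\<in>A. cinner y (f i))"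
  by (induct A rule: infinite_finite_induct) (simp_all add: cinner_add_right)

lemma power2_norm_eq_cinner: "(norm (x::'a::complex_hilbert))\<^sup>2 = Re (cinner x x)"
  by (simp add: cinner_self_norm)

lemma cinner_self_eq_0: "cinner (x::'a::complex_hilbert) x = 0 \<longleftrightarrow> x = 0"
  by (simp add: cinner_self_norm)

lemma norm_scaleC: "norm (a *\<^sub>C (x::'a::complex_hilbert)) = cmod a * norm x"
proof -
  have "cinner (a *\<^sub>C x) (a *\<^sub>C x) = a * cnj a * cinner x x"
    by (simp add: cinner_scaleC_left cinner_scaleC_right mult.assoc)
  then have "(norm (a *\<^sub>C x))\<^sup>2 = Re (a * cnj a * cinner x x)"
    by (simp only: power2_norm_eq_cinner)
  also have "\<dots> = (cmod a * norm x)\<^sup>2"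
    by (simp add: cinner_self_norm complex_mult_cnj power_mult_distrib cmod_power2)
  finally show ?thesis
    by (metis norm_ge_zero power2_eq_imp_eq mult_nonneg_nonneg)
qed

lemma norm_add_power2_orthogonal:
  assumes "cinner (x::'a::complex_hilbert) y = 0"
  shows "(norm (x + y))\<^sup>2 = (norm x)\<^sup>2 + (norm y)\<^sup>2"
proof -
  have "cinner y x = 0"
    using assms by (metis cinner_commute complex_cnj_zero)
  with assms show ?thesis
    by (simp add: power2_norm_eq_cinner cinner_add_left cinner_add_right)
qed

text \<open>Zero vectors are allowed, so that Gram--Schmidt needs no linear independence.\<close>

definition orthonormal_or_zero :: "(nat \<Rightarrow> 'a::complex_hilbert) \<Rightarrow> nat \<Rightarrow> bool" where
  "orthonormal_or_zero e N \<longleftrightarrow> (\<forall>j<N. \<forall>k<N. j \<noteq> k \<longrightarrow> cinner (e j) (e k) = 0) \<and>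
     (\<forall>j<N. e j = 0 \<or> cinner (e j) (e j) = 1)"

definition orth_proj :: "(nat \<Rightarrow> 'a::complex_hilbert) \<Rightarrow> nat \<Rightarrow> 'a \<Rightarrow> 'a" where
  "orth_proj e N f = (\<Sum>k<N. cinner f (e k) *\<^sub>C e k)"

lemma cinner_orth_proj:
  assumes "orthonormal_or_zero e N" "j < N"
  shows "cinner (orth_proj e N f) (e j) = cinner f (e j)"
proof -
  have "cinner (orth_proj e N f) (e j) = (\<Sum>k<N. cinner f (e k) * cinner (e k) (e j))"
    by (simp add: orth_proj_def cinner_sum_left cinner_scaleC_left)
  also have "\<dots> = (\<Sum>k<N. if k = j then cinner f (e j) else 0)"
  proof (rule sum.cong)
    fix k
    assume "k \<in> {..<N}"
    with assms have "k \<noteq> j \<Longrightarrow> cinner (e k) (e j) = 0" "e j = 0 \<or> cinner (e j) (e j) = 1"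
      unfolding orthonormal_or_zero_def by auto
    then show "cinner f (e k) * cinner (e k) (e j) = (if k = j then cinner f (e j) else 0)"
      by auto
  qed simp
  also have "\<dots> = cinner f (e j)"
    using assms(2) by simp
  finally show ?thesis .
qed

lemma cinner_orth_proj_residual_span:
  assumes "orthonormal_or_zero e N" "M \<le> N"
  shows "cinner (f - orth_proj e N f) (\<Sum>k<M. b k *\<^sub>C e k) = 0"
  using cinner_orth_proj[OF assms(1)] assms(2)
  by (simp add: cinner_sum_right cinner_scaleC_right cinner_diff_left)

lemma cinner_orth_proj_residual:
  assumes "orthonormal_or_zero e N"
  shows "cinner (f - orth_proj e N f) (orth_proj e N f) = 0"
  using cinner_orth_proj_residual_span[OF assms order.refl, of f "\<lambda>k. cinner f (e k)"]
  by (simp add: orth_proj_def)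

lemma power2_norm_eq_residual_plus_sum:
  assumes "orthonormal_or_zero e N"
  shows "(norm f)\<^sup>2 = (norm (f - orth_proj e N f))\<^sup>2 + (\<Sum>k<N. (cmod (cinner f (e k)))\<^sup>2)"
proof -
  have "cinner (orth_proj e N f) (orth_proj e N f)
      = (\<Sum>k<N. cnj (cinner f (e k)) * cinner (orth_proj e N f) (e k))"
    by (subst (2) orth_proj_def) (simp add: cinner_sum_right cinner_scaleC_right)
  also have "\<dots> = (\<Sum>k<N. complex_of_real ((cmod (cinner f (e k)))\<^sup>2))"
  proof (rule sum.cong)
    fix k
    assume "k \<in> {..<N}"
    then have "cinner (orth_proj e N f) (e k) = cinner f (e k)"
      using cinner_orth_proj[OF assms] by simp
    then show "cnj (cinner f (e k)) * cinner (orth_proj e N f) (e k)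
        = complex_of_real ((cmod (cinner f (e k)))\<^sup>2)"
      by (metis complex_norm_square mult.commute)
  qed simp
  finally have "(norm (orth_proj e N f))\<^sup>2 = (\<Sum>k<N. (cmod (cinner f (e k)))\<^sup>2)"
    by (simp add: power2_norm_eq_cinner)
  moreover have "f = (f - orth_proj e N f) + orth_proj e N f"
    by simp
  ultimately show ?thesis
    using norm_add_power2_orthogonal[OF cinner_orth_proj_residual[OF assms]] by metis
qed

lemma orth_proj_best_approximation:
  assumes "orthonormal_or_zero e N" "M \<le> N"
  shows "norm (f - orth_proj e N f) \<le> norm (f - (\<Sum>k<M. b k *\<^sub>C e k))"
proof -
  let ?P = "orth_proj e N f" and ?g = "\<Sum>k<M. b k *\<^sub>C e k"
  have "cinner (f - ?P) (?P - ?g) = 0"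
    using cinner_orth_proj_residual[OF assms(1)] cinner_orth_proj_residual_span[OF assms]
    by (simp add: cinner_diff_right)
  moreover have "f - ?g = (f - ?P) + (?P - ?g)"
    by simp
  ultimately have "(norm (f - ?g))\<^sup>2 = (norm (f - ?P))\<^sup>2 + (norm (?P - ?g))\<^sup>2"
    using norm_add_power2_orthogonal by metis
  then have "(norm (f - ?P))\<^sup>2 \<le> (norm (f - ?g))\<^sup>2"
    using zero_le_power2[of "norm (?P - ?g)"] by linarith
  then show ?thesis
    by (rule power2_le_imp_le) simp
qed

lemma cinner_unit_power2_le:
  fixes u :: "'a::complex_hilbert"
  assumes "cinner u u = 1"
  shows "(cmod (cinner f u))\<^sup>2 \<le> (norm f)\<^sup>2"
proof -
  have "orthonormal_or_zero (\<lambda>_. u) 1"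
    using assms by (simp add: orthonormal_or_zero_def)
  from power2_norm_eq_residual_plus_sum[OF this, of f] show ?thesis
    by simp
qed

lemma cinner_power2_le:
  fixes f g :: "'a::complex_hilbert"
  shows "(cmod (cinner f g))\<^sup>2 \<le> (norm f)\<^sup>2 * (norm g)\<^sup>2"
proof (cases "g = 0")
  case False
  define u where "u = complex_of_real (1 / norm g) *\<^sub>C g"
  have "norm u = 1"
    using False by (simp add: u_def norm_scaleC norm_divide)
  then have "cinner u u = 1"
    by (simp add: cinner_self_norm)
  have "cmod (cinner f g) = norm g * cmod (cinner f u)"
    using False by (simp add: u_def cinner_scaleC_right norm_divide)
  then have "(cmod (cinner f g))\<^sup>2 = (cmod (cinner f u))\<^sup>2 * (norm g)\<^sup>2"
    by (simp only: power_mult_distrib mult.commute)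
  also have "\<dots> \<le> (norm f)\<^sup>2 * (norm g)\<^sup>2"
    using cinner_unit_power2_le[OF \<open>cinner u u = 1\<close>] by (rule mult_right_mono) simp
  finally show ?thesis .
qed simp

definition gram_schmidt_step :: "(nat \<Rightarrow> 'a::complex_hilbert) \<Rightarrow> nat \<Rightarrow> 'a \<Rightarrow> 'a" where
  "gram_schmidt_step e n x = (let v = x - orth_proj e n x in
     if v = 0 then 0 else complex_of_real (1 / norm v) *\<^sub>C v)"

primrec gram_schmidt_upto :: "(nat \<Rightarrow> 'a::complex_hilbert) \<Rightarrow> nat \<Rightarrow> nat \<Rightarrow> 'a" where
  "gram_schmidt_upto d 0 = (\<lambda>_. 0)"
| "gram_schmidt_upto d (Suc n) =
     (gram_schmidt_upto d n)(n := gram_schmidt_step (gram_schmidt_upto d n) n (d n))"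

definition gram_schmidt :: "(nat \<Rightarrow> 'a::complex_hilbert) \<Rightarrow> nat \<Rightarrow> 'a" where
  "gram_schmidt d n = gram_schmidt_upto d (Suc n) n"

lemma gram_schmidt_upto_eq: "k < n \<Longrightarrow> gram_schmidt_upto d n k = gram_schmidt d k"
proof (induction n)
  case (Suc n)
  then show ?case
    by (cases "k = n") (auto simp: gram_schmidt_def)
qed simp

lemma gram_schmidt_step_cong:
  assumes "\<And>k. k < n \<Longrightarrow> e k = e' k"
  shows "gram_schmidt_step e n x = gram_schmidt_step e' n x"
proof -
  have "orth_proj e n x = orth_proj e' n x"
    unfolding orth_proj_def using assms by (intro sum.cong) auto
  then show ?thesis
    by (simp add: gram_schmidt_step_def)
qed

lemma gram_schmidt_eq:
  "gram_schmidt d n = gram_schmidt_step (gram_schmidt d) n (d n)"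
proof -
  have "gram_schmidt d n = gram_schmidt_step (gram_schmidt_upto d n) n (d n)"
    by (simp add: gram_schmidt_def)
  also have "\<dots> = gram_schmidt_step (gram_schmidt d) n (d n)"
    by (rule gram_schmidt_step_cong) (simp add: gram_schmidt_upto_eq)
  finally show ?thesis .
qed

lemma gram_schmidt_residual:
  fixes d :: "nat \<Rightarrow> 'a::complex_hilbert" and n :: nat
  defines "v \<equiv> d n - orth_proj (gram_schmidt d) n (d n)"
  shows "v = complex_of_real (norm v) *\<^sub>C gram_schmidt d n"
proof (cases "v = 0")
  case False
  then have "complex_of_real (norm v) *\<^sub>C gram_schmidt d n
      = (complex_of_real (norm v) * complex_of_real (1 / norm v)) *\<^sub>C v"
    by (simp add: gram_schmidt_eq[of d n] gram_schmidt_step_def v_def scaleC_scaleC Let_def)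
  also have "\<dots> = v"
    using False by (simp add: scaleC_one)
  finally show ?thesis ..
qed simp

lemma orthonormal_or_zero_gram_schmidt: "orthonormal_or_zero (gram_schmidt d) n"
proof (induction n)
  case 0
  then show ?case
    by (simp add: orthonormal_or_zero_def)
next
  case (Suc n)
  let ?e = "gram_schmidt d" and ?v = "d n - orth_proj (gram_schmidt d) n (d n)"
  have new_unit: "?e n = 0 \<or> cinner (?e n) (?e n) = 1"
  proof (cases "?v = 0")
    case False
    have "?v = complex_of_real (norm ?v) *\<^sub>C ?e n"
      by (rule gram_schmidt_residual)
    then have "norm ?v = norm ?v * norm (?e n)"
      by (metis norm_scaleC norm_of_real abs_norm_cancel)
    with False have "norm (?e n) = 1"
      by simp
    then show ?thesis
      by (simp add: cinner_self_norm)
  qed (simp add: gram_schmidt_eq[of d n] gram_schmidt_step_def)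
  have new_orth: "cinner (?e n) (?e k) = 0" if "k < n" for k
    using cinner_orth_proj[OF Suc that, of "d n"]
    by (simp add: gram_schmidt_eq[of d n] gram_schmidt_step_def Let_def cinner_scaleC_left cinner_diff_left)
  then have "cinner (?e k) (?e n) = 0" if "k < n" for k
    using that cinner_commute[of "?e k" "?e n"] by simp
  show ?case
    using Suc new_unit new_orth \<open>\<And>k. k < n \<Longrightarrow> cinner (?e k) (?e n) = 0\<close>
    unfolding orthonormal_or_zero_def
    by (metis less_Suc_eq)
qed

lemma gram_schmidt_span: "\<exists>b. d n = (\<Sum>k<Suc n. b k *\<^sub>C gram_schmidt d k)"
proof -
  let ?v = "d n - orth_proj (gram_schmidt d) n (d n)"
  define b where "b k = (if k < n then cinner (d n) (gram_schmidt d k) else complex_of_real (norm ?v))" for k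
  have "(\<Sum>k<Suc n. b k *\<^sub>C gram_schmidt d k)
      = orth_proj (gram_schmidt d) n (d n) + complex_of_real (norm ?v) *\<^sub>C gram_schmidt d n"
    by (simp add: b_def orth_proj_def)
  also have "\<dots> = d n"
    by (simp add: gram_schmidt_residual[of d n, symmetric])
  finally show ?thesis
    by metis
qed

lemma gram_schmidt_parseval:
  assumes "closure (range d) = UNIV"
  shows "(\<lambda>k. (cmod (cinner f (gram_schmidt d k)))\<^sup>2) sums (norm f)\<^sup>2"
  unfolding sums_def
proof (rule LIMSEQ_I)
  fix r :: real
  assume "0 < r"
  have "f \<in> closure (range d)"
    using assms by simp
  then obtain n where n: "dist (d n) f < sqrt r"
    using \<open>0 < r\<close> unfolding closure_approachable by (auto dest: spec[of _ "sqrt r"])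
  obtain b where b: "d n = (\<Sum>k<Suc n. b k *\<^sub>C gram_schmidt d k)"
    using gram_schmidt_span by blast
  have "norm ((\<Sum>k<N. (cmod (cinner f (gram_schmidt d k)))\<^sup>2) - (norm f)\<^sup>2) < r"
    if "Suc n \<le> N" for N
  proof -
    let ?P = "orth_proj (gram_schmidt d) N f"
    have "norm (f - ?P) \<le> norm (f - d n)"
      using orth_proj_best_approximation[OF orthonormal_or_zero_gram_schmidt that, where f = f and b = b] b
      by simp
    also have "\<dots> < sqrt r"
      using n by (simp add: dist_norm norm_minus_commute)
    finally have "(norm (f - ?P))\<^sup>2 < (sqrt r)\<^sup>2"
      by (intro power_strict_mono) auto
    then have "(norm (f - ?P))\<^sup>2 < r"
      using \<open>0 < r\<close> by simp
    then show ?thesis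
      using power2_norm_eq_residual_plus_sum[OF orthonormal_or_zero_gram_schmidt, of f d N] by simp
  qed
  then show "\<exists>no. \<forall>N\<ge>no. norm ((\<Sum>k<N. (cmod (cinner f (gram_schmidt d k)))\<^sup>2) - (norm f)\<^sup>2) < r"
    by blast
qed

lemma sums_interleave:
  fixes a b :: "nat \<Rightarrow> 'a::real_normed_vector"
  assumes "a sums A" "b sums B"
  shows "(\<lambda>m. if even m then a (m div 2) else b (m div 2)) sums (A + B)"
proof -
  have "strict_mono (\<lambda>n::nat. 2 * n)" "strict_mono (\<lambda>n::nat. 2 * n + 1)"
    by (auto simp: strict_mono_def)
  have "(\<lambda>m. if even m then a (m div 2) else 0) sums A"
    using assms(1)
    by (subst sums_mono_reindex[OF \<open>strict_mono (\<lambda>n. 2 * n)\<close>, symmetric])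
      (auto simp: image_iff elim!: evenE)
  moreover have "(\<lambda>m. if odd m then b (m div 2) else 0) sums B"
    using assms(2)
    by (subst sums_mono_reindex[OF \<open>strict_mono (\<lambda>n. 2 * n + 1)\<close>, symmetric])
      (auto simp: image_iff elim!: oddE)
  ultimately show ?thesis
    by (rule sums_add[THEN sums_cong[THEN iffD1, rotated]]) simp
qed

lemma summable_comp_strict_mono:
  fixes h :: "nat \<Rightarrow> real"
  assumes "strict_mono g" "\<And>m. 0 \<le> h m" "summable h"
  shows "summable (\<lambda>n. h (g n))"
proof -
  have "summable (\<lambda>m. if m \<in> range g then h m else 0)"
    by (rule summable_comparison_test'[OF assms(3), of 0]) (simp add: assms(2))
  then show ?thesis
    by (subst (asm) summable_mono_reindex[OF assms(1), symmetric]) auto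
qed

lemma bessel_inequality_square_summable:
  fixes g :: "nat \<Rightarrow> 'a::complex_hilbert"
  assumes "summable (\<lambda>n. (norm (g n))\<^sup>2)"
  shows "summable (\<lambda>n. (cmod (cinner f (g n)))\<^sup>2)"
    and "(\<Sum>n. (cmod (cinner f (g n)))\<^sup>2) \<le> (\<Sum>n. (norm (g n))\<^sup>2) * (norm f)\<^sup>2"
proof -
  have bound: "(cmod (cinner f (g n)))\<^sup>2 \<le> (norm f)\<^sup>2 * (norm (g n))\<^sup>2" for n
    by (rule cinner_power2_le)
  have summable_bound: "summable (\<lambda>n. (norm f)\<^sup>2 * (norm (g n))\<^sup>2)"
    by (rule summable_mult[OF assms])
  show summable: "summable (\<lambda>n. (cmod (cinner f (g n)))\<^sup>2)"
    by (rule summable_comparison_test'[OF summable_bound]) (simp add: bound)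
  have "(\<Sum>n. (cmod (cinner f (g n)))\<^sup>2) \<le> (\<Sum>n. (norm f)\<^sup>2 * (norm (g n))\<^sup>2)"
    by (rule suminf_le[OF bound summable summable_bound])
  also have "\<dots> = (\<Sum>n. (norm (g n))\<^sup>2) * (norm f)\<^sup>2"
    by (simp add: suminf_mult[OF assms] mult.commute)
  finally show "(\<Sum>n. (cmod (cinner f (g n)))\<^sup>2) \<le> (\<Sum>n. (norm (g n))\<^sup>2) * (norm f)\<^sup>2" .
qed

lemma is_frame_interleave_square_summable:
  fixes e g :: "nat \<Rightarrow> 'a::complex_hilbert"
  assumes parseval: "\<And>f. (\<lambda>k. (cmod (cinner f (e k)))\<^sup>2) sums (norm f)\<^sup>2"
    and square_summable: "summable (\<lambda>n. (norm (g n))\<^sup>2)"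
  shows "is_frame (\<lambda>m. if even m then e (m div 2) else g (m div 2))"
proof -
  define F where "F m = (if even m then e (m div 2) else g (m div 2))" for m
  define S where "S = (\<Sum>n. (norm (g n))\<^sup>2)"
  have "0 \<le> S"
    unfolding S_def by (rule suminf_nonneg[OF square_summable]) simp
  have "summable (\<lambda>m. (cmod (cinner f (F m)))\<^sup>2) \<and>
      1 * (norm f)\<^sup>2 \<le> (\<Sum>m. (cmod (cinner f (F m)))\<^sup>2) \<and>
      (\<Sum>m. (cmod (cinner f (F m)))\<^sup>2) \<le> (1 + S) * (norm f)\<^sup>2" for f
  proof -
    note bessel = bessel_inequality_square_summable[OF square_summable, of f, folded S_def]
    have "(\<lambda>m. (cmod (cinner f (F m)))\<^sup>2) = (\<lambda>m. if even m then (cmod (cinner f (e (m div 2))))\<^sup>2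
        else (cmod (cinner f (g (m div 2))))\<^sup>2)"
      by (simp add: F_def fun_eq_iff)
    then have "(\<lambda>m. (cmod (cinner f (F m)))\<^sup>2) sums ((norm f)\<^sup>2 + (\<Sum>n. (cmod (cinner f (g n)))\<^sup>2))"
      using sums_interleave[OF parseval[of f] summable_sums[OF bessel(1)]] by simp
    moreover have "0 \<le> (\<Sum>n. (cmod (cinner f (g n)))\<^sup>2)"
      by (rule suminf_nonneg[OF bessel(1)]) simp
    ultimately show ?thesis
      using bessel(2) by (simp add: sums_iff algebra_simps)
  qed
  with \<open>0 \<le> S\<close> show ?thesis
    unfolding is_frame_def F_def by (intro exI[of _ 1] exI[of _ "1 + S"]) auto
qed

lemma complex_bounded_linear_eq_0_if_cinner_apply_self_eq_0:
  fixes T :: "'a::complex_hilbert \<Rightarrow> 'a"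
  assumes "complex_bounded_linear T" "\<And>x. cinner (T x) x = 0"
  shows "T x = 0"
proof -
  have add: "T (x + y) = T x + T y" and hom: "T (c *\<^sub>C x) = c *\<^sub>C T x" for c x y
    using assms(1) by (simp_all add: complex_bounded_linear_def linear_simps)
  have sym: "cinner (T x) y + cinner (T y) x = 0" for x y
    using assms(2)[of "x + y"] assms(2)[of x] assms(2)[of y]
    by (simp add: add cinner_add_left cinner_add_right add.commute)
  have "cinner (T x) y = 0" for y
  proof -
    \<comment> \<open>polarization: replacing \<open>y\<close> by \<open>\<i> y\<close> flips the sign of the first summand only\<close>
    have "- \<i> * cinner (T x) y + \<i> * cinner (T y) x = 0"
      using sym[of x "\<i> *\<^sub>C y"] by (simp add: hom cinner_scaleC_left cinner_scaleC_right)
    then have "cinner (T y) x = cinner (T x) y"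
      by (simp add: algebra_simps)
    with sym[of x y] show ?thesis
      by simp
  qed
  from this[of "T x"] show ?thesis
    by (simp add: cinner_self_eq_0)
qed

lemma cinner_apply_scaleC_real_self:
  fixes T :: "'a::complex_hilbert \<Rightarrow> 'a"
  assumes "complex_bounded_linear T"
  shows "cinner (T (complex_of_real c *\<^sub>C x)) (complex_of_real c *\<^sub>C x)
    = complex_of_real (c\<^sup>2) * cinner (T x) x"
  using assms by (simp add: complex_bounded_linear_def cinner_scaleC_left cinner_scaleC_right power2_eq_square)

lemma exists_unit_cinner_apply_self_neq_0:
  fixes T :: "'a::complex_hilbert \<Rightarrow> 'a"
  assumes "complex_bounded_linear T" "T \<noteq> (\<lambda>x. 0)"
  obtains u where "norm u = 1" "cinner (T u) u \<noteq> 0"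
proof -
  obtain x where x: "cinner (T x) x \<noteq> 0"
    using complex_bounded_linear_eq_0_if_cinner_apply_self_eq_0[OF assms(1)] assms(2) by blast
  then have "x \<noteq> 0"
    by auto
  define u where "u = complex_of_real (1 / norm x) *\<^sub>C x"
  have "norm u = 1"
    using \<open>x \<noteq> 0\<close> by (simp add: u_def norm_scaleC norm_divide)
  moreover have "cinner (T u) u = complex_of_real ((1 / norm x)\<^sup>2) * cinner (T x) x"
    unfolding u_def by (rule cinner_apply_scaleC_real_self[OF assms(1)])
  then have "cinner (T u) u \<noteq> 0"
    using x \<open>x \<noteq> 0\<close> by simp
  ultimately show ?thesis
    by (rule that)
qed

lemma separable_space_imp_dense_sequence:
  assumes "separable_space TYPE('a::topological_space)"
  shows "\<exists>d::nat \<Rightarrow> 'a. closure (range d) = UNIV"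
proof -
  obtain D :: "'a set" where "countable D" "closure D = UNIV"
    using assms unfolding separable_space_def by blast
  moreover from this have "D \<noteq> {}"
    by auto
  ultimately show ?thesis
    by (intro exI[of _ "from_nat_into D"]) simp
qed

lemma power2_powr_half:
  fixes x a :: real
  assumes "0 < x"
  shows "(x powr (a / 2))\<^sup>2 = x powr a"
  using assms by (simp add: powr_power)

lemma summable_Suc_powr_neg_inverse:
  assumes "0 < p" "p < 1"
  shows "summable (\<lambda>n. real (Suc n) powr (- 1 / p))"
proof -
  have "summable (\<lambda>n. real n powr (- 1 / p))"
    using assms by (simp add: summable_real_powr_iff field_simps)
  then show ?thesis
    by (subst summable_Suc_iff)
qed

lemma not_summable_Suc_powr_neg_inverse_times:
  assumes "0 < p" "z \<noteq> 0"
  shows "\<not> summable (\<lambda>n. cmod (complex_of_real (real (Suc n) powr (- 1 / p)) * z) powr p)"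
proof
  have "cmod (complex_of_real (real (Suc n) powr (- 1 / p)) * z) powr p
      = cmod z powr p * inverse (real (Suc n))" for n
  proof -
    have "cmod (complex_of_real (real (Suc n) powr (- 1 / p)) * z) powr p
        = (real (Suc n) powr (- 1 / p)) powr p * cmod z powr p"
      by (simp only: norm_mult norm_of_real abs_of_nonneg[OF powr_ge_zero] powr_mult)
    also have "(real (Suc n) powr (- 1 / p)) powr p = inverse (real (Suc n))"
      unfolding powr_powr using assms(1) by (simp add: powr_minus)
    finally show ?thesis
      by (simp only: mult.commute)
  qed
  moreover assume "summable (\<lambda>n. cmod (complex_of_real (real (Suc n) powr (- 1 / p)) * z) powr p)"
  ultimately have "summable (\<lambda>n. inverse (real (Suc n)))"
    using assms(2) by simp
  then show False
    using not_summable_harmonic[where 'a = real] summable_Suc_iff[where f = "\<lambda>n. inverse (real n)"]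
    by simp
qed

theorem proposition19:
  fixes T :: "'a::complex_hilbert \<Rightarrow> 'a" and p :: real
  assumes "separable_space TYPE('a)"
    and "0 < p" and "p < 1"
    and "complex_bounded_linear T"
    and "T \<noteq> (\<lambda>x. 0)"
  shows "\<exists>F::nat \<Rightarrow> 'a. is_frame F \<and> \<not> in_ell_p p (\<lambda>n. cinner (T (F n)) (F n))"
proof -
  obtain d :: "nat \<Rightarrow> 'a" where dense: "closure (range d) = UNIV"
    using separable_space_imp_dense_sequence[OF assms(1)] by blast
  obtain u where u: "norm u = 1" "cinner (T u) u \<noteq> 0"
    using exists_unit_cinner_apply_self_neq_0[OF assms(4,5)] by blast
  define c where "c n = real (Suc n) powr (- 1 / p / 2)" for n
  define F where "F m = (if even m then gram_schmidt d (m div 2)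
    else complex_of_real (c (m div 2)) *\<^sub>C u)" for m
  have c_sq: "(c n)\<^sup>2 = real (Suc n) powr (- 1 / p)" for n
    unfolding c_def by (rule power2_powr_half) simp
  have "summable (\<lambda>n. (norm (complex_of_real (c n) *\<^sub>C u))\<^sup>2)"
    using summable_Suc_powr_neg_inverse[OF assms(2,3)] by (simp add: norm_scaleC u c_sq)
  then have "is_frame F"
    unfolding F_def by (rule is_frame_interleave_square_summable[OF gram_schmidt_parseval[OF dense]])
  moreover have "\<not> in_ell_p p (\<lambda>m. cinner (T (F m)) (F m))"
  proof
    assume "in_ell_p p (\<lambda>m. cinner (T (F m)) (F m))"
    then have "summable (\<lambda>n. cmod (cinner (T (F (2 * n + 1))) (F (2 * n + 1))) powr p)"
      unfolding in_ell_p_def by (rule summable_comp_strict_mono[rotated 2]) (auto simp: strict_mono_def)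
    then show False
      using not_summable_Suc_powr_neg_inverse_times[OF assms(2) u(2)]
      by (simp add: F_def cinner_apply_scaleC_real_self[OF assms(4)] c_sq)
  qed
  ultimately show ?thesis
    by blast
qed

end
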